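(* Suppose $\theta_i=\vartheta$ for all $i\in\{1,\dots,n\}$, with $\vartheta\in(0,1)$, and that $C$ is doubly-stochastic with zero diagonal. Then for every $x(0)\in\Delta_n$ the trajectory of system (B) satisfies that $x(k)$ converges exponentially to $\mathbf 1_n/n$.
   Context: Let $n\ge 2$, $\mathbf 1_n$ the all-ones vector, $I_n$ the identity matrix, $\Delta_n=\{x\in\mathbb R^n: x\ge 0,\ \mathbf 1_n^Tx=1\}$. Let $C\in\mathbb R^{n\times n}$ be a nonnegative matrix with zero diagonal (doubly-stochastic: all row sums and column sums equal $1$), $\theta=(\theta_1,\dots,\theta_n)\in[0,1]^n$, $\Theta=\mathrm{diag}(\theta)$, and for $x\in\mathbb R^n$, $W(x)=\mathrm{diag}(x)+(I_n-\mathrm{diag}(x))C$. System (B): $V(k+1)=\Theta W(x(k))V(k)+I_n-\Theta$, $x(k+1)=V(k+1)^T\mathbf 1_n/n$, $k=0,1,2,\dots$, with $V(0)=I_n$ and $x(0)\in\Delta_n$. *)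

theory Defs
  imports "HOL-Analysis.Analysis"
begin

definition diag_mat :: "real^'n \<Rightarrow> real^'n^'n" where
  "diag_mat v = (\<chi> i j. if i = j then v $ i else 0)"

definition prob_simplex :: "(real^'n) set" where
  "prob_simplex = {x. (\<forall>i. x $ i \<ge> 0) \<and> (\<Sum>i\<in>UNIV. x $ i) = 1}"

definition doubly_stochastic_zero_diag :: "real^'n^'n \<Rightarrow> bool" where
  "doubly_stochastic_zero_diag C \<longleftrightarrow>
     (\<forall>i j. C $ i $ j \<ge> 0) \<and> (\<forall>i. C $ i $ i = 0) \<and>
     (\<forall>i. (\<Sum>j\<in>UNIV. C $ i $ j) = 1) \<and> (\<forall>j. (\<Sum>i\<in>UNIV. C $ i $ j) = 1)"

definition Wmat :: "real^'n^'n \<Rightarrow> real^'n \<Rightarrow> real^'n^'n" where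
  "Wmat C x = diag_mat x + (mat 1 - diag_mat x) ** C"

fun sysB :: "real^'n^'n \<Rightarrow> real^'n \<Rightarrow> real^'n \<Rightarrow> nat \<Rightarrow> (real^'n^'n) \<times> (real^'n)" where
  "sysB C \<theta> x0 0 = (mat 1, x0)"
| "sysB C \<theta> x0 (Suc k) =
     (let V = fst (sysB C \<theta> x0 k); x = snd (sysB C \<theta> x0 k);
          V' = diag_mat \<theta> ** Wmat C x ** V + (mat 1 - diag_mat \<theta>)
      in (V', (1 / real CARD('n)) *\<^sub>R (transpose V' *v (\<chi> i. 1))))"

end

theory Submission
  imports Defs
begin

text \<open>
  With \<open>\<theta> \<equiv> t\<close> and \<open>u = 1/n\<close>, the matrix \<open>R = (1 - t)(I - t W(u))\<^sup>-\<^sup>1\<close> is the fixed point of the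
  \<open>V\<close>-recursion at the uniform opinion vector. It is doubly stochastic, and comparing its
  centred columns with the quadratic form of the doubly stochastic matrix \<open>W(u)\<close> shows
  \<open>R\<^sub>i\<^sub>i > 1/n\<close>. Since \<open>W(x) - W(u) = diag(x - u)(I - C)\<close> and \<open>t(I - C)R = n/(n-1)(1 - t)(I - R)\<close>,
  \<open>V(k+1) - R = t W(x(k))(V(k) - R) + n/(n-1)(1 - t) diag(x(k) - u)(I - R)\<close>.
  Each entry of \<open>x(k) - u\<close> is an average of a column of \<open>V(k) - R\<close>, whose rows sum to zero, so
  it is at most half the largest row-wise \<open>l\<^sub>1\<close> distance from \<open>V(k)\<close> to \<open>R\<close>. Hence that distance
  contracts by the factor \<open>max\<^sub>i (t + n/(n-1)(1 - t)(1 - R\<^sub>i\<^sub>i)) < 1\<close>, and \<open>x(k) \<rightarrow> u\<close> exponentially.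
\<close>

lemma matrix_mult_nth: "(A ** B) $ i $ j = (\<Sum>k\<in>UNIV. A$i$k * B$k$j)"
  by (simp add: matrix_matrix_mult_def)

lemma matrix_vector_mult_nth: "(A *v x) $ i = (\<Sum>j\<in>UNIV. A$i$j * x$j)"
  by (simp add: matrix_vector_mult_def)

lemma vector_matrix_mult_nth: "(x v* A) $ j = (\<Sum>i\<in>UNIV. x$i * A$i$j)"
  by (simp add: vector_matrix_mult_def)

lemma matrix_add_rdistrib: "(A + B) ** C = A ** C + B ** (C :: 'a::semiring_1^_^_)"
  by (simp add: vec_eq_iff matrix_mult_nth sum.distrib distrib_right)

lemma matrix_diff_rdistrib: "(A - B) ** C = A ** C - B ** (C :: 'a::ring_1^_^_)"
  by (simp add: vec_eq_iff matrix_mult_nth sum_subtractf left_diff_distrib)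

lemma matrix_diff_ldistrib: "A ** (B - C) = A ** B - A ** (C :: 'a::ring_1^_^_)"
  by (simp add: vec_eq_iff matrix_mult_nth sum_subtractf right_diff_distrib)

lemma matrix_mult_scaleR_right: "A ** (k *\<^sub>R B) = k *\<^sub>R (A ** B :: real^_^_)"
  by (simp add: vec_eq_iff matrix_mult_nth sum_distrib_left mult_ac)

lemma row_sum_eq_1_iff: "A *v 1 = 1 \<longleftrightarrow> (\<forall>i. (\<Sum>j\<in>UNIV. A$i$j) = (1::real))"
  by (simp add: vec_eq_iff matrix_vector_mult_nth)

lemma column_sum_eq_1_iff: "1 v* A = 1 \<longleftrightarrow> (\<forall>j. (\<Sum>i\<in>UNIV. A$i$j) = (1::real))"
  by (simp add: vec_eq_iff vector_matrix_mult_nth)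

lemma obtain_argmax:
  fixes f :: "'a::finite \<Rightarrow> 'b::linorder"
  obtains i where "\<And>j. f j \<le> f i"
proof -
  have "Max (range f) \<in> range f"
    by (rule Max_in) auto
  then obtain i where i: "f i = Max (range f)"
    by (metis rangeE)
  have "f j \<le> f i" for j
    unfolding i by (rule Max_ge) auto
  then show ?thesis
    by (rule that)
qed

lemma abs_le_half_sum_abs:
  fixes f :: "'a \<Rightarrow> real"
  assumes "finite A" and "i \<in> A" and "sum f A = 0"
  shows "2 * \<bar>f i\<bar> \<le> (\<Sum>j\<in>A. \<bar>f j\<bar>)"
proof -
  have "\<bar>f i\<bar> = \<bar>\<Sum>j\<in>A - {i}. f j\<bar>"
    using assms by (simp add: sum.remove)
  also have "\<dots> \<le> (\<Sum>j\<in>A - {i}. \<bar>f j\<bar>)"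
    by (rule sum_abs)
  finally show ?thesis
    using assms by (simp add: sum.remove)
qed

lemma norm_le_card_mult:
  fixes v :: "real^'n"
  assumes "\<And>j. \<bar>v$j\<bar> \<le> b"
  shows "norm v \<le> real CARD('n) * b"
  using norm_le_l1_cart[of v] sum_mono[of UNIV "\<lambda>j. \<bar>v$j\<bar>" "\<lambda>j. b"] assms by simp

definition row_stochastic :: "real^'n^'m \<Rightarrow> bool" where
  "row_stochastic A \<longleftrightarrow> (\<forall>i j. 0 \<le> A$i$j) \<and> A *v 1 = 1"

definition doubly_stochastic :: "real^'n^'n \<Rightarrow> bool" where
  "doubly_stochastic A \<longleftrightarrow> row_stochastic A \<and> 1 v* A = 1"

lemma row_stochastic_iff:
  "row_stochastic A \<longleftrightarrow> (\<forall>i j. 0 \<le> A$i$j) \<and> (\<forall>i. (\<Sum>j\<in>UNIV. A$i$j) = 1)"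
  by (simp add: row_stochastic_def row_sum_eq_1_iff)

lemma row_stochastic_nonneg: "row_stochastic A \<Longrightarrow> 0 \<le> A$i$j"
  by (simp add: row_stochastic_def)

lemma row_stochastic_row_sum: "row_stochastic A \<Longrightarrow> (\<Sum>j\<in>UNIV. A$i$j) = 1"
  by (simp add: row_stochastic_iff)

lemma row_stochastic_le_1: "row_stochastic A \<Longrightarrow> A$i$j \<le> 1"
  using member_le_sum[of j UNIV "\<lambda>j. A$i$j"] by (simp add: row_stochastic_iff)

lemma doubly_stochastic_column_sum: "doubly_stochastic A \<Longrightarrow> (\<Sum>i\<in>UNIV. A$i$j) = 1"
  by (simp add: doubly_stochastic_def column_sum_eq_1_iff)

lemma doubly_stochastic_if_zero_diag: "doubly_stochastic_zero_diag C \<Longrightarrow> doubly_stochastic C"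
  by (simp add: doubly_stochastic_zero_diag_def doubly_stochastic_def row_stochastic_iff
      column_sum_eq_1_iff)

lemma prob_simplex_le_1: "x \<in> prob_simplex \<Longrightarrow> x$i \<le> 1"
  using member_le_sum[of i UNIV "\<lambda>j. x$j"] by (simp add: prob_simplex_def)

lemma row_stochastic_mult:
  "row_stochastic A \<Longrightarrow> row_stochastic B \<Longrightarrow> row_stochastic (A ** B)"
  by (simp add: row_stochastic_def matrix_mult_nth sum_nonneg flip: matrix_vector_mul_assoc)

lemma row_stochastic_convex:
  assumes "row_stochastic A" "row_stochastic B" "0 \<le> t" "t \<le> 1"
  shows "row_stochastic (t *\<^sub>R A + (1 - t) *\<^sub>R B)"
  using assms by (simp add: row_stochastic_iff sum.distrib flip: sum_distrib_left)

lemma row_stochastic_mat_1: "row_stochastic (mat 1)"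
  by (simp add: row_stochastic_def) (simp add: mat_def)

lemma doubly_stochastic_inner_le:
  fixes W :: "real^'n^'n"
  assumes W: "doubly_stochastic W"
  shows "v \<bullet> (W *v v) \<le> v \<bullet> v"
proof -
  have nonneg: "0 \<le> W$i$j" and rows: "(\<Sum>j\<in>UNIV. W$i$j) = 1" and cols: "(\<Sum>i\<in>UNIV. W$i$j) = 1"
    for i j
    using W by (simp_all add: doubly_stochastic_def row_stochastic_iff column_sum_eq_1_iff)
  have "v \<bullet> (W *v v) = (\<Sum>i\<in>UNIV. \<Sum>j\<in>UNIV. W$i$j * (v$i * v$j))"
    by (simp add: inner_vec_def matrix_vector_mult_nth sum_distrib_left mult_ac)
  also have "\<dots> \<le> (\<Sum>i\<in>UNIV. \<Sum>j\<in>UNIV. W$i$j * ((v$i)\<^sup>2 + (v$j)\<^sup>2) / 2)"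
  proof (intro sum_mono)
    fix i j
    have amgm: "v$i * v$j \<le> ((v$i)\<^sup>2 + (v$j)\<^sup>2) / 2"
      using sum_squares_bound[of "v$i" "v$j"] by simp
    show "W$i$j * (v$i * v$j) \<le> W$i$j * ((v$i)\<^sup>2 + (v$j)\<^sup>2) / 2"
      using mult_left_mono[OF amgm nonneg] by simp
  qed
  also have "\<dots> = ((\<Sum>i\<in>UNIV. \<Sum>j\<in>UNIV. W$i$j * (v$i)\<^sup>2)
      + (\<Sum>i\<in>UNIV. \<Sum>j\<in>UNIV. W$i$j * (v$j)\<^sup>2)) / 2"
    by (simp add: distrib_left sum.distrib add_divide_distrib sum_divide_distrib)
  also have "(\<Sum>i\<in>UNIV. \<Sum>j\<in>UNIV. W$i$j * (v$i)\<^sup>2) = v \<bullet> v"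
    by (simp add: rows inner_vec_def power2_eq_square flip: sum_distrib_right)
  also have "(\<Sum>i\<in>UNIV. \<Sum>j\<in>UNIV. W$i$j * (v$j)\<^sup>2) = v \<bullet> v"
    by (subst sum.swap) (simp add: cols inner_vec_def power2_eq_square flip: sum_distrib_right)
  finally show ?thesis
    by simp
qed

section \<open>The resolvent \<open>(1 - t)(I - t W)\<^sup>-\<^sup>1\<close>\<close>

text \<open>The resolvent is handled only through its fixed-point equation, which determines it.\<close>

lemma row_stochastic_fixpoint_eq_0:
  assumes W: "row_stochastic W" and t: "\<bar>t\<bar> < 1" and v: "v = t *\<^sub>R (W *v v)"
  shows "v = 0"
proof -
  obtain i where max: "\<And>j. \<bar>v$j\<bar> \<le> \<bar>v$i\<bar>"
    using obtain_argmax[of "\<lambda>j. \<bar>v$j\<bar>"] by blast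
  have "\<bar>v$i\<bar> = \<bar>(t *\<^sub>R (W *v v))$i\<bar>"
    using v by (rule arg_cong)
  also have "\<dots> = \<bar>t\<bar> * \<bar>\<Sum>j\<in>UNIV. W$i$j * v$j\<bar>"
    by (simp add: matrix_vector_mult_nth abs_mult)
  also have "\<dots> \<le> \<bar>t\<bar> * (\<Sum>j\<in>UNIV. W$i$j * \<bar>v$i\<bar>)"
    using row_stochastic_nonneg[OF W] max
    by (intro mult_left_mono order_trans[OF sum_abs sum_mono]) (auto simp: abs_mult mult_left_mono)
  also have "\<dots> = \<bar>t\<bar> * \<bar>v$i\<bar>"
    using row_stochastic_row_sum[OF W] by (simp flip: sum_distrib_right)
  finally have "\<bar>v$i\<bar> = 0"
    using t by (smt (verit) mult_less_cancel_right2)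
  then show ?thesis
    using max by (metis abs_le_zero_iff vec_eq_iff zero_index)
qed

lemma resolvent_exists:
  fixes W :: "real^'n^'n"
  assumes "row_stochastic W" and "\<bar>t\<bar> < 1"
  obtains R :: "real^'n^'n" where "R = t *\<^sub>R (W ** R) + (1 - t) *\<^sub>R mat 1"
proof -
  have "\<exists>B. B ** (mat 1 - t *\<^sub>R W) = mat 1"
    unfolding matrix_left_invertible_ker
  proof (intro allI impI)
    fix v assume "(mat 1 - t *\<^sub>R W) *v v = 0"
    then have "v = t *\<^sub>R (W *v v)"
      by (simp add: algebra_simps scaleR_matrix_vector_assoc)
    with assms show "v = 0"
      by (rule row_stochastic_fixpoint_eq_0)
  qed
  then obtain B where "(mat 1 - t *\<^sub>R W) ** B = mat 1"
    using matrix_left_right_inverse by blast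
  then have "B = mat 1 + t *\<^sub>R (W ** B)"
    by (simp add: matrix_diff_rdistrib diff_eq_eq flip: scalar_matrix_assoc)
  moreover have "W ** ((1 - t) *\<^sub>R B) = (1 - t) *\<^sub>R (W ** B)"
    by (rule matrix_mult_scaleR_right)
  ultimately have "(1 - t) *\<^sub>R B = t *\<^sub>R (W ** ((1 - t) *\<^sub>R B)) + (1 - t) *\<^sub>R mat 1"
    by (metis add.commute scaleR_add_right scaleR_left_commute)
  then show ?thesis
    by (rule that)
qed

lemma resolvent_nth:
  fixes W R :: "real^'n^'n"
  assumes "R = t *\<^sub>R (W ** R) + (1 - t) *\<^sub>R mat 1"
  shows "R$i$j = t * (\<Sum>l\<in>UNIV. W$i$l * R$l$j) + (if i = j then 1 - t else 0)"
  using arg_cong[OF assms, of "\<lambda>A. A$i$j"] by (simp add: matrix_mult_nth mat_def)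

lemma resolvent_row_sum:
  fixes W R :: "real^'n^'n"
  assumes W: "row_stochastic W" and t: "\<bar>t\<bar> < 1"
    and R: "R = t *\<^sub>R (W ** R) + (1 - t) *\<^sub>R mat 1"
  shows "R *v 1 = 1"
proof -
  have "R *v 1 = (t *\<^sub>R (W ** R) + (1 - t) *\<^sub>R mat 1) *v 1"
    by (rule arg_cong[OF R])
  also have "\<dots> = t *\<^sub>R (W *v (R *v 1)) + (1 - t) *\<^sub>R 1"
    by (simp add: algebra_simps matrix_vector_mul_assoc flip: scaleR_matrix_vector_assoc)
  finally have "R *v 1 = t *\<^sub>R (W *v (R *v 1)) + (1 - t) *\<^sub>R 1" .
  moreover have "W *v 1 = 1"
    using W by (simp add: row_stochastic_def)
  ultimately have "R *v 1 - 1 = t *\<^sub>R (W *v (R *v 1 - 1))"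
    by (simp add: algebra_simps)
  then have "R *v 1 - 1 = 0"
    using W t by (rule row_stochastic_fixpoint_eq_0[rotated 2])
  then show ?thesis
    by simp
qed

lemma resolvent_column_sum:
  fixes W R :: "real^'n^'n"
  assumes W: "1 v* W = 1" and t: "t \<noteq> 1"
    and R: "R = t *\<^sub>R (W ** R) + (1 - t) *\<^sub>R mat 1"
  shows "1 v* R = 1"
proof -
  have "1 v* R = 1 v* (t *\<^sub>R (W ** R) + (1 - t) *\<^sub>R mat 1)"
    by (rule arg_cong[OF R])
  also have "\<dots> = t *\<^sub>R (1 v* R) + (1 - t) *\<^sub>R 1"
    using W by (simp add: vector_matrix_mult_add_rdistrib vector_scaleR_matrix_ac
        flip: vector_matrix_mul_assoc)
  finally have "1 v* R = t *\<^sub>R (1 v* R) + (1 - t) *\<^sub>R 1" .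
  then have "(1 - t) *\<^sub>R (1 v* R) = (1 - t) *\<^sub>R 1"
    by (simp add: algebra_simps)
  with t show ?thesis
    by simp
qed

lemma resolvent_nonneg:
  fixes W R :: "real^'n^'n"
  assumes W: "row_stochastic W" and t: "0 \<le> t" "t < 1"
    and R: "R = t *\<^sub>R (W ** R) + (1 - t) *\<^sub>R mat 1"
  shows "0 \<le> R$i$j"
proof -
  obtain l where min: "\<And>k. R$l$j \<le> R$k$j"
    using obtain_argmax[of "\<lambda>k. - R$k$j"] by auto
  have "t * R$l$j = t * (\<Sum>k\<in>UNIV. W$l$k * R$l$j)"
    using row_stochastic_row_sum[OF W] by (simp flip: sum_distrib_right)
  also have "\<dots> \<le> t * (\<Sum>k\<in>UNIV. W$l$k * R$k$j)"
    using row_stochastic_nonneg[OF W] min t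
    by (intro mult_left_mono sum_mono) auto
  also have "\<dots> \<le> R$l$j"
    using resolvent_nth[OF R, of l j] t by auto
  finally have "0 \<le> (1 - t) * R$l$j"
    by (simp add: algebra_simps)
  with t have "0 \<le> R$l$j"
    by (simp add: zero_le_mult_iff)
  then show ?thesis
    using min order_trans by blast
qed

lemma doubly_stochastic_resolvent:
  fixes W R :: "real^'n^'n"
  assumes "doubly_stochastic W" and "0 \<le> t" "t < 1"
    and "R = t *\<^sub>R (W ** R) + (1 - t) *\<^sub>R mat 1"
  shows "doubly_stochastic R"
proof -
  have "row_stochastic W" "1 v* W = 1"
    using assms(1) by (simp_all add: doubly_stochastic_def)
  then show ?thesis
    using resolvent_nonneg[OF _ assms(2,3,4)] resolvent_row_sum[OF _ _ assms(4)]
      resolvent_column_sum[OF _ _ assms(4)] assms(2,3)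
    unfolding doubly_stochastic_def row_stochastic_def by simp
qed

lemma resolvent_diag_gt:
  fixes W R :: "real^'n^'n"
  assumes W: "doubly_stochastic W" and t: "0 \<le> t" "t < 1" and n: "CARD('n) \<ge> 2"
    and R: "R = t *\<^sub>R (W ** R) + (1 - t) *\<^sub>R mat 1"
  shows "1 / real CARD('n) < R$i$i"
proof -
  txt \<open>\<open>v\<close> is the \<open>i\<close>-th column of \<open>R\<close> centred at \<open>1/n\<close>; it solves \<open>(I - t W) v = (1 - t)(e\<^sub>i - u)\<close>.\<close>
  define N where "N = real CARD('n)"
  define e :: "real^'n" where "e = axis i 1"
  define v where "v = R *v e - (1 / N) *\<^sub>R 1"
  have W1: "W *v 1 = 1"
    using W by (simp add: doubly_stochastic_def row_stochastic_def)
  have "R *v e = ((t *\<^sub>R (W ** R) + (1 - t) *\<^sub>R mat 1)) *v e"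
    by (rule arg_cong[OF R])
  then have "R *v e - t *\<^sub>R (W *v (R *v e)) = (1 - t) *\<^sub>R e"
    by (simp add: algebra_simps matrix_vector_mul_assoc flip: scaleR_matrix_vector_assoc)
  then have "v - t *\<^sub>R (W *v v) = (1 - t) *\<^sub>R e - (1 / N) *\<^sub>R (1 - t *\<^sub>R (W *v 1))"
    by (simp add: v_def algebra_simps)
  also have "1 - t *\<^sub>R (W *v 1) = (1 - t) *\<^sub>R (1 :: real^'n)"
    by (simp add: W1 scaleR_diff_left)
  finally have v_eq: "v - t *\<^sub>R (W *v v) = (1 - t) *\<^sub>R (e - (1 / N) *\<^sub>R 1)"
    by (simp add: scaleR_diff_right mult.commute)
  have "1 \<bullet> (R *v e) = 1"
    using doubly_stochastic_column_sum[OF doubly_stochastic_resolvent[OF W t R]]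
    by (simp add: e_def inner_vec_def matrix_vector_mult_basis column_def)
  then have sum_v: "1 \<bullet> v = 0"
    using n by (simp add: v_def N_def inner_vec_def sum_subtractf)
  have "v \<bullet> v - t * (v \<bullet> (W *v v)) = v \<bullet> (v - t *\<^sub>R (W *v v))"
    by (simp add: inner_diff_right)
  also have "\<dots> = (1 - t) * (v$i - (1 / N) * (1 \<bullet> v))"
    by (simp add: v_eq inner_diff_right e_def inner_axis inner_commute[of v 1])
  finally have "v \<bullet> v - t * (v \<bullet> (W *v v)) = (1 - t) * v$i"
    by (simp add: sum_v)
  moreover have "t * (v \<bullet> (W *v v)) \<le> t * (v \<bullet> v)"
    using doubly_stochastic_inner_le[OF W] t(1) by (rule mult_left_mono)
  ultimately have "(1 - t) * (v \<bullet> v) \<le> (1 - t) * v$i"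
    by (simp add: left_diff_distrib)
  with t have "v \<bullet> v \<le> v$i"
    by simp
  moreover have "v \<noteq> 0"
  proof
    assume "v = 0"
    then have "(1 - t) * (1 - 1 / N) = 0"
      using arg_cong[OF v_eq, of "\<lambda>w. w$i"] by (simp add: e_def)
    with t n show False
      by (simp add: N_def)
  qed
  ultimately have "0 < v$i"
    by (metis inner_gt_zero_iff order_less_le_trans)
  then show ?thesis
    by (simp add: v_def e_def N_def matrix_vector_mult_basis column_def)
qed

lemma diag_mat_mult_nth: "(diag_mat d ** A) $ i $ j = d$i * A$i$j"
  by (simp add: diag_mat_def matrix_mult_nth if_distrib if_distribR sum.delta cong: if_cong)

lemma diag_mat_const: "diag_mat (\<chi> i. c) = c *\<^sub>R mat 1"
  by (simp add: vec_eq_iff diag_mat_def mat_def)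

lemma mat_1_minus_diag_mat: "mat 1 - diag_mat x = diag_mat (1 - x)"
  by (simp add: vec_eq_iff diag_mat_def mat_def)

lemma Wmat_nth: "Wmat C x $ i $ l = (if i = l then x$i else 0) + (1 - x$i) * C$i$l"
  by (simp add: Wmat_def mat_1_minus_diag_mat diag_mat_mult_nth) (simp add: diag_mat_def)

lemma Wmat_const: "Wmat C (\<chi> i. c) = c *\<^sub>R mat 1 + (1 - c) *\<^sub>R C"
  by (simp add: vec_eq_iff Wmat_nth mat_def)

lemma Wmat_diff: "Wmat C x - Wmat C y = diag_mat (x - y) ** (mat 1 - C)"
  by (simp add: vec_eq_iff Wmat_nth diag_mat_mult_nth mat_def algebra_simps)

lemma row_stochastic_Wmat:
  assumes "row_stochastic C" and "\<And>i. 0 \<le> x$i" and "\<And>i. x$i \<le> 1"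
  shows "row_stochastic (Wmat C x)"
  using assms
  by (simp add: row_stochastic_iff Wmat_nth sum.distrib flip: sum_distrib_left)

lemma doubly_stochastic_Wmat_const:
  assumes "doubly_stochastic C" and "0 \<le> c" "c \<le> 1"
  shows "doubly_stochastic (Wmat C (\<chi> i. c))"
  using assms row_stochastic_convex[OF row_stochastic_mat_1 _ assms(2,3), of C]
  by (simp add: Wmat_const doubly_stochastic_def vector_matrix_mult_add_rdistrib
      vector_scaleR_matrix_ac algebra_simps flip: scaleR_add_left)

lemma resolvent_Wmat_uniform_mat_1_minus:
  fixes C R :: "real^'n^'n"
  defines "N \<equiv> real CARD('n)"
  assumes n: "CARD('n) \<ge> 2"
    and R: "R = t *\<^sub>R (Wmat C (\<chi> i. 1 / N) ** R) + (1 - t) *\<^sub>R mat 1"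
  shows "t *\<^sub>R ((mat 1 - C) ** R) = (N / (N - 1) * (1 - t)) *\<^sub>R (mat 1 - R)"
proof -
  have N: "2 \<le> N"
    using n by (simp add: N_def)
  have "t * (R$i$j - (C ** R)$i$j) = N / (N - 1) * (1 - t) * (mat 1 $ i $ j - R$i$j)" for i j
  proof -
    define S where "S = (C ** R)$i$j"
    define d :: real where "d = mat 1 $ i $ j"
    have "R$i$j = (t *\<^sub>R (Wmat C (\<chi> i. 1 / N) ** R) + (1 - t) *\<^sub>R mat 1)$i$j"
      using R by (rule arg_cong)
    then have "R$i$j = t * (R$i$j / N + (1 - 1 / N) * S) + (1 - t) * d"
      by (simp add: Wmat_const matrix_add_rdistrib S_def d_def flip: scalar_matrix_assoc)
    then have "t * (N - 1) * (R$i$j - S) = N * (1 - t) * (d - R$i$j)"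
      using N by (simp add: field_simps)
    then show ?thesis
      using N by (simp add: S_def d_def field_simps)
  qed
  then show ?thesis
    by (simp add: vec_eq_iff matrix_diff_rdistrib)
qed

lemma Wmat_step_minus_resolvent:
  fixes C R V :: "real^'n^'n" and x :: "real^'n"
  defines "N \<equiv> real CARD('n)"
  assumes n: "CARD('n) \<ge> 2"
    and R: "R = t *\<^sub>R (Wmat C (\<chi> i. 1 / N) ** R) + (1 - t) *\<^sub>R mat 1"
  shows "t *\<^sub>R (Wmat C x ** V) + (1 - t) *\<^sub>R mat 1 - R
    = t *\<^sub>R (Wmat C x ** (V - R))
      + (N / (N - 1) * (1 - t)) *\<^sub>R (diag_mat (x - (\<chi> i. 1 / N)) ** (mat 1 - R))"
    (is "?V' - R = _")
proof -
  define u :: "real^'n" where "u = (\<chi> i. 1 / N)"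
  have diff: "diag_mat (x - u) ** ((mat 1 - C) ** R) = Wmat C x ** R - Wmat C u ** R"
    unfolding matrix_mul_assoc Wmat_diff[symmetric] by (rule matrix_diff_rdistrib)
  have "?V' - R = ?V' - (t *\<^sub>R (Wmat C u ** R) + (1 - t) *\<^sub>R mat 1)"
    using R unfolding u_def by (rule arg_cong)
  also have "\<dots> = t *\<^sub>R (Wmat C x ** (V - R)) + t *\<^sub>R (diag_mat (x - u) ** ((mat 1 - C) ** R))"
    by (simp add: diff matrix_diff_ldistrib algebra_simps)
  also have "t *\<^sub>R (diag_mat (x - u) ** ((mat 1 - C) ** R))
      = diag_mat (x - u) ** (t *\<^sub>R ((mat 1 - C) ** R))"
    by (simp add: matrix_mult_scaleR_right)
  also have "\<dots> = (N / (N - 1) * (1 - t)) *\<^sub>R (diag_mat (x - u) ** (mat 1 - R))"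
    using resolvent_Wmat_uniform_mat_1_minus[OF n R[unfolded N_def]]
    by (simp add: N_def matrix_mult_scaleR_right)
  finally show ?thesis
    by (simp add: u_def)
qed

section \<open>Row distances\<close>

definition row_dist1 :: "real^'n^'m \<Rightarrow> real^'n^'m \<Rightarrow> 'm \<Rightarrow> real" where
  "row_dist1 A B i = (\<Sum>j\<in>UNIV. \<bar>A$i$j - B$i$j\<bar>)"

lemma row_dist1_ge_abs:
  fixes V R :: "real^'n^'m"
  assumes "V *v 1 = R *v 1"
  shows "2 * \<bar>V$l$j - R$l$j\<bar> \<le> row_dist1 V R l"
proof -
  have "(\<Sum>k\<in>UNIV. V$l$k - R$l$k) = 0"
    using arg_cong[OF assms, of "\<lambda>v. v$l"] by (simp add: matrix_vector_mult_nth sum_subtractf)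
  then show ?thesis
    unfolding row_dist1_def using abs_le_half_sum_abs[of UNIV j "\<lambda>k. V$l$k - R$l$k"] by simp
qed

lemma row_dist1_mat_1:
  assumes "row_stochastic R"
  shows "row_dist1 (mat 1) R i = 2 * (1 - R$i$i)"
proof -
  have "\<bar>mat 1 $ i $ j - R$i$j\<bar> = R$i$j + (if j = i then 2 * (1 - R$i$i) - 1 else 0)" for j
    using row_stochastic_nonneg[OF assms] row_stochastic_le_1[OF assms] by (simp add: mat_def)
  then show ?thesis
    using row_stochastic_row_sum[OF assms] by (simp add: row_dist1_def sum.distrib)
qed

lemma row_dist1_contraction_step:
  fixes W V V' R :: "real^'n^'n" and d :: "real^'n"
  assumes dev: "V' - R = t *\<^sub>R (W ** (V - R)) + c *\<^sub>R (diag_mat d ** (mat 1 - R))"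
    and W: "row_stochastic W" and R: "row_stochastic R" and t: "0 \<le> t" and c: "0 \<le> c"
    and M: "\<And>l. row_dist1 V R l \<le> M" and d: "\<bar>d$i\<bar> \<le> M / 2"
  shows "row_dist1 V' R i \<le> (t + c * (1 - R$i$i)) * M"
proof -
  have "row_dist1 V' R i \<le> (\<Sum>j\<in>UNIV. t * (\<Sum>l\<in>UNIV. W$i$l * \<bar>V$l$j - R$l$j\<bar>)
      + c * \<bar>d$i\<bar> * \<bar>mat 1 $ i $ j - R$i$j\<bar>)"
    unfolding row_dist1_def
  proof (rule sum_mono)
    fix j
    have tri: "\<bar>t * a + c * d$i * b\<bar> \<le> t * \<bar>a\<bar> + c * \<bar>d$i\<bar> * \<bar>b\<bar>" for a b
      using abs_triangle_ineq[of "t * a" "c * d$i * b"] t c by (simp add: abs_mult)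
    have "V'$i$j - R$i$j
        = t * (\<Sum>l\<in>UNIV. W$i$l * (V$l$j - R$l$j)) + c * d$i * (mat 1 $ i $ j - R$i$j)"
      using arg_cong[OF dev, of "\<lambda>A. A$i$j"]
      by (simp add: diag_mat_mult_nth) (simp add: matrix_mult_nth)
    then have "\<bar>V'$i$j - R$i$j\<bar>
        \<le> t * \<bar>\<Sum>l\<in>UNIV. W$i$l * (V$l$j - R$l$j)\<bar> + c * \<bar>d$i\<bar> * \<bar>mat 1 $ i $ j - R$i$j\<bar>"
      by (simp only: tri)
    moreover have "\<bar>\<Sum>l\<in>UNIV. W$i$l * (V$l$j - R$l$j)\<bar> \<le> (\<Sum>l\<in>UNIV. W$i$l * \<bar>V$l$j - R$l$j\<bar>)"
      using row_stochastic_nonneg[OF W] by (intro order_trans[OF sum_abs]) (simp add: abs_mult)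
    ultimately show "\<bar>V'$i$j - R$i$j\<bar> \<le> t * (\<Sum>l\<in>UNIV. W$i$l * \<bar>V$l$j - R$l$j\<bar>)
        + c * \<bar>d$i\<bar> * \<bar>mat 1 $ i $ j - R$i$j\<bar>"
      using mult_left_mono[OF _ t] by fastforce
  qed
  also have "\<dots> = t * (\<Sum>l\<in>UNIV. W$i$l * row_dist1 V R l) + c * \<bar>d$i\<bar> * row_dist1 (mat 1) R i"
  proof -
    have "(\<Sum>j\<in>UNIV. \<Sum>l\<in>UNIV. W$i$l * \<bar>V$l$j - R$l$j\<bar>) = (\<Sum>l\<in>UNIV. W$i$l * row_dist1 V R l)"
      unfolding row_dist1_def sum_distrib_left by (rule sum.swap)
    then show ?thesis
      by (simp add: sum.distrib row_dist1_def flip: sum_distrib_left)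
  qed
  also have "\<dots> \<le> t * (\<Sum>l\<in>UNIV. W$i$l * M) + c * (M / 2) * row_dist1 (mat 1) R i"
    using row_stochastic_nonneg[OF W] M d t c
    by (intro add_mono mult_left_mono mult_right_mono sum_mono) (auto simp: row_dist1_def)
  also have "(\<Sum>l\<in>UNIV. W$i$l * M) = M"
    using row_stochastic_row_sum[OF W] by (simp flip: sum_distrib_right)
  also have "t * M + c * (M / 2) * row_dist1 (mat 1) R i = (t + c * (1 - R$i$i)) * M"
    by (simp add: row_dist1_mat_1[OF R] algebra_simps)
  finally show ?thesis .
qed

lemma column_average_minus_uniform_le:
  fixes V R :: "real^'n^'n"
  assumes V: "V *v 1 = 1" and R: "doubly_stochastic R" and M: "\<And>l. row_dist1 V R l \<le> M"
  shows "\<bar>((1 / real CARD('n)) *\<^sub>R (1 v* V))$j - 1 / real CARD('n)\<bar> \<le> M / 2"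
proof -
  define N where "N = real CARD('n)"
  have N: "0 < N"
    by (simp add: N_def)
  have "((1 / N) *\<^sub>R (1 v* V))$j - 1 / N = (\<Sum>l\<in>UNIV. V$l$j - R$l$j) / N"
    using doubly_stochastic_column_sum[OF R, of j]
    by (simp add: vector_matrix_mult_nth sum_subtractf diff_divide_distrib)
  also have "\<bar>\<dots>\<bar> \<le> (\<Sum>l\<in>UNIV. \<bar>V$l$j - R$l$j\<bar>) / N"
    using N by (simp add: divide_right_mono sum_abs)
  also have "\<dots> \<le> (\<Sum>l\<in>(UNIV::'n set). M / 2) / N"
  proof -
    have "R *v 1 = 1"
      using R by (simp add: doubly_stochastic_def row_stochastic_def)
    then have "\<bar>V$l$j - R$l$j\<bar> \<le> M / 2" for l
      using row_dist1_ge_abs[of V R l j] V M[of l] by simp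
    then show ?thesis
      using N by (intro divide_right_mono sum_mono) auto
  qed
  also have "\<dots> = M / 2"
    using N by (simp add: N_def)
  finally show ?thesis
    by (simp add: N_def)
qed

section \<open>Trajectories of system (B) with constant \<theta>\<close>

lemma sysB_fst_Suc:
  "fst (sysB C (\<chi> i. t) x0 (Suc k))
    = t *\<^sub>R (Wmat C (snd (sysB C (\<chi> i. t) x0 k)) ** fst (sysB C (\<chi> i. t) x0 k))
      + (1 - t) *\<^sub>R mat 1"
  by (simp add: Let_def diag_mat_const scaleR_diff_left matrix_mul_assoc
      flip: scalar_matrix_assoc)

lemma sysB_snd_Suc:
  fixes C :: "real^'n^'n"
  shows   "snd (sysB C \<theta> x0 (Suc k)) = (1 / real CARD('n)) *\<^sub>R (1 v* fst (sysB C \<theta> x0 (Suc k)))"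
  by (simp add: Let_def one_vec_def)

lemma average_row_in_prob_simplex:
  fixes V :: "real^'n^'m"
  assumes "row_stochastic V"
  shows "(1 / real CARD('m)) *\<^sub>R (1 v* V) \<in> prob_simplex"
proof -
  have "(\<Sum>j\<in>UNIV. \<Sum>i\<in>UNIV. V$i$j) = real CARD('m)"
    using assms by (subst sum.swap) (simp add: row_stochastic_iff)
  then show ?thesis
    using assms
    by (simp add: prob_simplex_def vector_matrix_mult_nth row_stochastic_iff sum_nonneg
        flip: sum_distrib_left sum_divide_distrib)
qed

lemma sysB_invariant:
  fixes C :: "real^'n^'n"
  assumes C: "row_stochastic C" and t: "0 \<le> t" "t \<le> 1" and x0: "x0 \<in> prob_simplex"
  shows "row_stochastic (fst (sysB C (\<chi> i. t) x0 k)) \<and> snd (sysB C (\<chi> i. t) x0 k) \<in> prob_simplex"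
proof (induction k)
  case 0
  then show ?case
    using x0 by (simp add: row_stochastic_mat_1)
next
  case (Suc k)
  then have "row_stochastic (fst (sysB C (\<chi> i. t) x0 (Suc k)))"
    unfolding sysB_fst_Suc
    by (intro row_stochastic_convex row_stochastic_mult row_stochastic_Wmat C
        row_stochastic_mat_1 t) (auto simp: prob_simplex_def prob_simplex_le_1)
  then show ?case
    unfolding sysB_snd_Suc using average_row_in_prob_simplex by blast
qed

lemma sysB_contraction:
  fixes C R :: "real^'n^'n"
  defines "N \<equiv> real CARD('n)"
  assumes n: "CARD('n) \<ge> 2" and C: "doubly_stochastic C" and t: "0 \<le> t" "t < 1"
    and x0: "x0 \<in> prob_simplex"
    and R: "R = t *\<^sub>R (Wmat C (\<chi> i. 1 / N) ** R) + (1 - t) *\<^sub>R mat 1"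
    and \<rho>: "0 < \<rho>" "\<rho> \<le> 1" "\<And>i. t + N / (N - 1) * (1 - t) * (1 - R$i$i) \<le> \<rho>"
  shows "(\<forall>i. row_dist1 (fst (sysB C (\<chi> i. t) x0 k)) R i \<le> 2 * \<rho> ^ k / \<rho>)
    \<and> (\<forall>j. \<bar>snd (sysB C (\<chi> i. t) x0 k) $ j - 1 / N\<bar> \<le> \<rho> ^ k / \<rho>)"
proof -
  txt \<open>The factor \<open>1/\<rho>\<close> pays for the first step, where \<open>x(0)\<close> is unrelated to \<open>V(0) = I\<close>.\<close>
  have u: "0 \<le> 1 / N" "1 / N \<le> 1"
    using n by (simp_all add: N_def)
  have R_ds: "doubly_stochastic R"
    using doubly_stochastic_resolvent[OF doubly_stochastic_Wmat_const[OF C u] t R] .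
  then have R_rs: "row_stochastic R"
    by (simp add: doubly_stochastic_def)
  have C_rs: "row_stochastic C"
    using C by (simp add: doubly_stochastic_def)
  show ?thesis
  proof (induction k)
    case 0
    have "row_dist1 (mat 1) R i \<le> 2 / \<rho>" for i
    proof -
      have "row_dist1 (mat 1) R i \<le> 2"
        using row_dist1_mat_1[OF R_rs] row_stochastic_nonneg[OF R_rs] by simp
      also have "2 \<le> 2 / \<rho>"
        using \<rho> by (simp add: field_simps)
      finally show ?thesis .
    qed
    moreover have "\<bar>x0$j - 1 / N\<bar> \<le> 1 / \<rho>" for j
    proof -
      have "0 \<le> x0$j" "x0$j \<le> 1"
        using x0 prob_simplex_le_1[OF x0, of j] by (auto simp: prob_simplex_def)
      with u have "\<bar>x0$j - 1 / N\<bar> \<le> 1"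
        unfolding abs_le_iff by linarith
      also have "1 \<le> 1 / \<rho>"
        using \<rho> by (simp add: field_simps)
      finally show ?thesis .
    qed
    ultimately show ?case
      by simp
  next
    case (Suc k)
    define V where "V = fst (sysB C (\<chi> i. t) x0 k)"
    define x where "x = snd (sysB C (\<chi> i. t) x0 k)"
    define V' where "V' = fst (sysB C (\<chi> i. t) x0 (Suc k))"
    have inv: "row_stochastic (fst (sysB C (\<chi> i. t) x0 k'))
        \<and> snd (sysB C (\<chi> i. t) x0 k') \<in> prob_simplex" for k'
      using sysB_invariant[OF C_rs t(1) less_imp_le[OF t(2)] x0] .
    have x: "x \<in> prob_simplex" and V'_rs: "row_stochastic V'"
      unfolding x_def V'_def using inv by blast+
    have dev: "V' - R = t *\<^sub>R (Wmat C x ** (V - R))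
        + (N / (N - 1) * (1 - t)) *\<^sub>R (diag_mat (x - (\<chi> i. 1 / N)) ** (mat 1 - R))"
      unfolding V'_def sysB_fst_Suc V_def[symmetric] x_def[symmetric] N_def
      by (rule Wmat_step_minus_resolvent[OF n R[unfolded N_def]])
    have dist: "row_dist1 V' R i \<le> 2 * \<rho> ^ Suc k / \<rho>" for i
    proof -
      have "row_dist1 V' R i \<le> (t + N / (N - 1) * (1 - t) * (1 - R$i$i)) * (2 * \<rho> ^ k / \<rho>)"
      proof (rule row_dist1_contraction_step[OF dev])
        show "row_stochastic (Wmat C x)"
          using x by (intro row_stochastic_Wmat[OF C_rs])
            (auto simp: prob_simplex_def prob_simplex_le_1)
        show "0 \<le> N / (N - 1) * (1 - t)"
          using n t by (simp add: N_def)
        show "\<bar>(x - (\<chi> i. 1 / N)) $ i\<bar> \<le> 2 * \<rho> ^ k / \<rho> / 2"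
          using Suc.IH by (simp add: x_def)
      qed (use R_rs t Suc.IH in \<open>simp_all add: V_def\<close>)
      also have "\<dots> \<le> \<rho> * (2 * \<rho> ^ k / \<rho>)"
        using \<rho> by (intro mult_right_mono) auto
      finally show ?thesis
        by (simp add: mult_ac)
    qed
    moreover have "\<bar>snd (sysB C (\<chi> i. t) x0 (Suc k)) $ j - 1 / N\<bar> \<le> \<rho> ^ Suc k / \<rho>" for j
    proof -
      have "V' *v 1 = 1"
        using V'_rs by (simp add: row_stochastic_def)
      moreover have "snd (sysB C (\<chi> i. t) x0 (Suc k)) = (1 / N) *\<^sub>R (1 v* V')"
        unfolding V'_def N_def by (rule sysB_snd_Suc)
      ultimately show ?thesis
        using column_average_minus_uniform_le[OF _ R_ds dist, of j] \<rho>(1) by (simp add: N_def)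
    qed
    ultimately show ?case
      unfolding V'_def by blast
  qed
qed

lemma contraction_factor_lt_1:
  fixes N t r :: real
  assumes "1 < N" and "t < 1" and "1 / N < r"
  shows "t + N / (N - 1) * (1 - t) * (1 - r) < 1"
proof -
  have "N / (N - 1) * (1 - r) < 1"
    using assms by (simp add: field_simps)
  then have "(1 - t) * (N / (N - 1) * (1 - r)) < (1 - t) * 1"
    using assms by (intro mult_strict_left_mono) simp_all
  then show ?thesis
    by (simp add: mult_ac)
qed

theorem lemma3:
  fixes C :: "real^'n^'n" and \<theta>0 :: real and x0 :: "real^'n"
  assumes "CARD('n) \<ge> 2"
    and "doubly_stochastic_zero_diag C"
    and "0 < \<theta>0" and "\<theta>0 < 1"
    and "x0 \<in> prob_simplex"
  shows "\<exists>c \<rho>. c \<ge> 0 \<and> 0 \<le> \<rho> \<and> \<rho> < 1 \<and>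
           (\<forall>k. norm (snd (sysB C (\<chi> i. \<theta>0) x0 k) - (\<chi> i. 1 / real CARD('n))) \<le> c * \<rho> ^ k)"
proof -
  define N where "N = real CARD('n)"
  have n: "CARD('n) \<ge> 2" and t: "0 \<le> \<theta>0" "\<theta>0 < 1"
    using assms by simp_all
  have C: "doubly_stochastic C"
    using assms(2) by (rule doubly_stochastic_if_zero_diag)
  have W: "doubly_stochastic (Wmat C (\<chi> i. 1 / N))"
    using n by (intro doubly_stochastic_Wmat_const[OF C]) (simp_all add: N_def)
  then obtain R where R: "R = \<theta>0 *\<^sub>R (Wmat C (\<chi> i. 1 / N) ** R) + (1 - \<theta>0) *\<^sub>R mat 1"
    using resolvent_exists t unfolding doubly_stochastic_def by (metis abs_of_nonneg)
  define f where "f i = \<theta>0 + N / (N - 1) * (1 - \<theta>0) * (1 - R$i$i)" for i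
  obtain i0 where i0: "\<And>i. f i \<le> f i0"
    using obtain_argmax[of f] by blast
  have "\<theta>0 \<le> f i0"
    using n t row_stochastic_le_1[of R i0 i0] doubly_stochastic_resolvent[OF W t R]
    by (simp add: f_def N_def doubly_stochastic_def)
  moreover have "f i0 < 1"
    unfolding f_def using n t resolvent_diag_gt[OF W t n R]
    by (intro contraction_factor_lt_1) (simp_all add: N_def)
  moreover have "\<bar>snd (sysB C (\<chi> i. \<theta>0) x0 k) $ j - 1 / N\<bar> \<le> f i0 ^ k / f i0" for k j
    using sysB_contraction[OF n C t assms(5) R[unfolded N_def], of "f i0"] i0 \<open>\<theta>0 \<le> f i0\<close>
      \<open>f i0 < 1\<close> assms(3) by (simp add: f_def N_def)
  then have "norm (snd (sysB C (\<chi> i. \<theta>0) x0 k) - (\<chi> i. 1 / N)) \<le> N / f i0 * f i0 ^ k" for k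
    using norm_le_card_mult[of "snd (sysB C (\<chi> i. \<theta>0) x0 k) - (\<chi> i. 1 / N)" "f i0 ^ k / f i0"]
    by (simp add: N_def)
  ultimately show ?thesis
    using assms(3) by (intro exI[of _ "N / f i0"] exI[of _ "f i0"]) (auto simp: N_def)
qed

end
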